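(* Fix $R>1$. For $t\ge0$ let $h=h_t\in H^1(1,R)$ be a minimizer of \[ E[h]=\int_1^R\left\{\frac12(h')^2+\frac3{r^2}h^2+\frac t8(1-h^2)^2+\frac{h_+}{8}(1+3h^4-4h^3)\right\}r^2\,dr \] subject to $h(1)=h(R)=1$. Then $0<h\le1$ on $[1,R]$ for all $t\ge0$, and $h_t\to1$ uniformly on $[1,R]$ as $t\to\infty$.
   Context: $h_+=\frac{3+\sqrt{9+8t}}{4}$. *)

theory Defs
  imports "HOL-Analysis.Analysis"
begin

text \<open>Sobolev space H^1(a,b) in one dimension, via the continuous representative:
  h belongs to H^1(a,b) with weak derivative g iff g is square integrable on [a,b]
  (hence integrable) and h(x) = h(a) + int_a^x g for all x in [a,b].\<close>
definition H1 :: "real \<Rightarrow> real \<Rightarrow> (real \<Rightarrow> real) \<Rightarrow> (real \<Rightarrow> real) \<Rightarrow> bool" where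
  "H1 a b h g \<longleftrightarrow>
     set_integrable lborel {a..b} g \<and>
     set_integrable lborel {a..b} (\<lambda>x. (g x)\<^sup>2) \<and>
     (\<forall>x\<in>{a..b}. h x = h a + (LINT s:{a..x}|lborel. g s))"

definition hplus :: "real \<Rightarrow> real" where
  "hplus t = (3 + sqrt (9 + 8 * t)) / 4"

definition energy :: "real \<Rightarrow> real \<Rightarrow> (real \<Rightarrow> real) \<Rightarrow> (real \<Rightarrow> real) \<Rightarrow> real" where
  "energy t R h g =
     (LINT r:{1..R}|lborel.
        ((1/2) * (g r)\<^sup>2 + 3 / r\<^sup>2 * (h r)\<^sup>2 + t / 8 * (1 - (h r)\<^sup>2)\<^sup>2
         + hplus t / 8 * (1 + 3 * (h r)^4 - 4 * (h r)^3)) * r\<^sup>2)"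

definition is_minimizer :: "real \<Rightarrow> real \<Rightarrow> (real \<Rightarrow> real) \<Rightarrow> bool" where
  "is_minimizer t R h \<longleftrightarrow>
     (\<exists>g. H1 1 R h g \<and> h 1 = 1 \<and> h R = 1 \<and>
        (\<forall>k k'. H1 1 R k k' \<and> k 1 = 1 \<and> k R = 1 \<longrightarrow> energy t R h g \<le> energy t R k k'))"

end

theory Submission
  imports Defs
begin

text \<open>Every claim comes from comparing the minimizer \<open>h\<close> with a competitor that differs from it
  only on an interval \<open>[a, b]\<close> at whose ends it agrees with \<open>h\<close>. Reflecting \<open>h\<close> to \<open>-h\<close> where
  \<open>h < 0\<close> lowers the cubic part of the potential; replacing \<open>h\<close> by \<open>1\<close> where \<open>h > 1\<close> lowers
  every term; and if \<open>h\<close> had a first zero \<open>c\<close>, then \<open>h\<close> would rise from \<open>0\<close> to a level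
  \<open>\<delta>\<close> within a distance \<open>\<epsilon>\<close> of \<open>c\<close>, which costs kinetic energy at least \<open>\<delta>\<^sup>2/\<epsilon>\<close>, whereas
  cutting \<open>h\<close> off at \<open>\<delta>\<close> changes the remaining energy by only \<open>O(\<delta>\<^sup>2)\<close>.

  Comparing with the constant \<open>1\<close> bounds the energy by \<open>3 (R - 1)\<close> for every \<open>t\<close>. Hence
  \<open>\<integral> h'\<^sup>2\<close> is bounded, making the \<open>h\<^sub>t\<close> uniformly Hoelder continuous, and
  \<open>t \<integral> (1 - h\<^sup>2)\<^sup>2\<close> is bounded. A dip of \<open>h\<^sub>t\<close> below \<open>1 - \<epsilon>\<close> would therefore persist on an
  interval of fixed length, which is incompatible with \<open>\<integral> (1 - h\<^sub>t\<^sup>2)\<^sup>2 = O(1/t)\<close>.\<close>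

section \<open>Integrals and continuous functions on an interval\<close>

lemma square_integral_le:
  fixes g :: "real \<Rightarrow> real"
  assumes gi: "g integrable_on {u..v}" and g2: "(\<lambda>x. (g x)\<^sup>2) integrable_on {u..v}" and uv: "u \<le> v"
  shows "(integral {u..v} g)\<^sup>2 \<le> (v - u) * integral {u..v} (\<lambda>x. (g x)\<^sup>2)"
proof (cases "u = v")
  case False
  define I1 where "I1 = integral {u..v} g"
  define I2 where "I2 = integral {u..v} (\<lambda>x. (g x)\<^sup>2)"
  define m where "m = I1 / (v - u)"
  have vm: "(v - u) * m = I1"
    unfolding m_def using False by simp
  have i1: "(\<lambda>x. (g x)\<^sup>2 - (2 * m) * g x) integrable_on {u..v}"
    by (intro integrable_diff g2 integrable_on_mult_right gi)
  have sq: "(\<lambda>x. (g x - m)\<^sup>2) = (\<lambda>x. ((g x)\<^sup>2 - (2 * m) * g x) + m\<^sup>2)"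
    by (auto simp: fun_eq_iff power2_eq_square algebra_simps)
  have "(\<lambda>x. (g x - m)\<^sup>2) integrable_on {u..v}"
    unfolding sq by (intro integrable_add i1 integrable_const_ivl)
  then have "0 \<le> integral {u..v} (\<lambda>x. (g x - m)\<^sup>2)"
    by (rule integral_nonneg) simp
  also have "\<dots> = I2 - 2 * m * I1 + (v - u) * m\<^sup>2"
    unfolding sq using uv
    by (simp add: integral_add[OF i1 integrable_const_ivl] integral_diff[OF g2 integrable_on_mult_right[OF gi]]
        I1_def I2_def)
  also have "\<dots> = I2 - m * I1"
    using vm by (simp add: power2_eq_square algebra_simps)
  finally have "0 \<le> (v - u) * (I2 - m * I1)"
    using uv by simp
  also have "\<dots> = (v - u) * I2 - I1\<^sup>2"
    using vm by (simp add: power2_eq_square algebra_simps)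
  finally show ?thesis
    unfolding I1_def I2_def by simp
qed simp

lemma integral_pos_if_continuous:
  fixes f :: "real \<Rightarrow> real"
  assumes "continuous_on {a..b} f" "a < b" "\<forall>y\<in>{a..b}. 0 \<le> f y" "x \<in> {a..b}" "0 < f x"
  shows "0 < integral {a..b} f"
proof -
  have "integral {a..b} f \<noteq> 0"
    using integral_cbox_eq_0_iff[of a b f] assms by auto
  moreover have "0 \<le> integral {a..b} f"
    by (rule integral_nonneg) (use assms integrable_continuous_interval in auto)
  ultimately show ?thesis
    by simp
qed

lemma set_integrable_if:
  fixes f f' :: "'a \<Rightarrow> real"
  assumes "set_integrable M A f" "set_integrable M A f'" "A \<inter> B \<in> sets M" "A - B \<in> sets M"
  shows "set_integrable M A (\<lambda>x. if x \<in> B then f' x else f x)"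
proof -
  have "set_integrable M (A \<inter> B) f'" "set_integrable M (A - B) f"
    using assms by (auto intro: set_integrable_subset)
  then have "integrable M (\<lambda>x. indicator (A \<inter> B) x *\<^sub>R f' x + indicator (A - B) x *\<^sub>R f x)"
    unfolding set_integrable_def by (rule Bochner_Integration.integrable_add)
  moreover have "(\<lambda>x. indicator (A \<inter> B) x *\<^sub>R f' x + indicator (A - B) x *\<^sub>R f x)
      = (\<lambda>x. indicator A x *\<^sub>R (if x \<in> B then f' x else f x))"
    by (auto simp: fun_eq_iff split: split_indicator)
  ultimately show ?thesis
    unfolding set_integrable_def by simp
qed

lemma last_crossing:
  fixes f :: "real \<Rightarrow> real"
  assumes cont: "continuous_on {u..v} f" and uv: "u \<le> v" and fu: "c \<le> f u" and fv: "f v < c"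
  shows "\<exists>a\<in>{u..<v}. f a = c \<and> (\<forall>y\<in>{a..v}. f y \<le> c)"
proof -
  define S where "S = {y \<in> {u..v}. (\<lambda>_. c) y \<le> f y}"
  have "closed S"
    unfolding S_def by (rule continuous_on_closed_Collect_le) (auto intro: cont)
  moreover have "S \<noteq> {}" "bdd_above S"
    using fu uv unfolding S_def by auto
  ultimately have "Sup S \<in> S"
    by (rule closed_contains_Sup[rotated -1])
  define a where "a = Sup S"
  have a: "a \<in> {u..v}" "c \<le> f a"
    using \<open>Sup S \<in> S\<close> unfolding a_def S_def by auto
  have above: "f y < c" if "y \<in> {u..v}" "a < y" for y
    using cSup_upper[of y S] \<open>bdd_above S\<close> that unfolding a_def S_def by force
  have "a < v"
    using a fv by (cases "a = v") auto
  moreover have "f a = c"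
  proof -
    obtain z where z: "a \<le> z" "z \<le> v" "f z = c"
      using IVT2'[of f v c a] fv a continuous_on_subset[OF cont] by auto
    then have "z = a"
      using above[of z] a by force
    then show ?thesis
      using z by simp
  qed
  ultimately show ?thesis
    using a above by (force simp: less_imp_le)
qed

lemma sublevel_component:
  fixes f :: "real \<Rightarrow> real"
  assumes cont: "continuous_on {u..v} f" and x: "x \<in> {u..v}" "f x < c"
    and fu: "c \<le> f u" and fv: "c \<le> f v"
  shows "\<exists>a b. u \<le> a \<and> a < x \<and> x < b \<and> b \<le> v \<and> f a = c \<and> f b = c \<and> (\<forall>y\<in>{a..b}. f y \<le> c)"
proof -
  obtain a where a: "a \<in> {u..<x}" "f a = c" "\<forall>y\<in>{a..x}. f y \<le> c"
    using last_crossing[of u x f c] continuous_on_subset[OF cont] x fu by auto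
  have "continuous_on {-v..-x} (\<lambda>y. f (- y))"
    by (rule continuous_on_compose2[OF cont]) (use x in \<open>auto intro!: continuous_intros\<close>)
  then obtain b' where b': "b' \<in> {-v..<-x}" "f (- b') = c" "\<forall>y\<in>{b'..-x}. f (- y) \<le> c"
    using last_crossing[of "-v" "-x" "\<lambda>y. f (- y)" c] x fv by auto
  have "\<forall>y\<in>{x..-b'}. f y \<le> c"
  proof
    fix y assume "y \<in> {x..-b'}"
    then show "f y \<le> c"
      using b'(3)[rule_format, of "- y"] by simp
  qed
  then show ?thesis
    using a b' by (intro exI[of _ a] exI[of _ "- b'"]) force
qed

lemma first_nonpos:
  fixes f :: "real \<Rightarrow> real"
  assumes cont: "continuous_on {u..v} f" and x: "x \<in> {u..v}" "f x \<le> 0" and fu: "0 < f u"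
  shows "\<exists>c\<in>{u<..v}. f c \<le> 0 \<and> (\<forall>y\<in>{u..<c}. 0 < f y)"
proof -
  define Z where "Z = {y \<in> {u..v}. f y \<le> (\<lambda>_. 0) y}"
  have "closed Z"
    unfolding Z_def by (rule continuous_on_closed_Collect_le) (auto intro: cont)
  moreover have "Z \<noteq> {}" "bdd_below Z"
    using x unfolding Z_def by auto
  ultimately have "Inf Z \<in> Z"
    by (rule closed_contains_Inf[rotated -1])
  moreover have "0 < f y" if "y \<in> {u..<Inf Z}" for y
    using cInf_lower[of y Z] \<open>bdd_below Z\<close> that \<open>Inf Z \<in> Z\<close> unfolding Z_def by force
  ultimately show ?thesis
    using fu unfolding Z_def by (cases "Inf Z = u") force+
qed

section \<open>Sobolev functions on an interval\<close>

lemma H1_integrable: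
  assumes "H1 a b h g"
  shows "set_integrable lborel {a..b} g" "set_integrable lborel {a..b} (\<lambda>x. (g x)\<^sup>2)"
    "g integrable_on {a..b}" "(\<lambda>x. (g x)\<^sup>2) integrable_on {a..b}"
  using assms set_borel_integral_eq_integral(1) unfolding H1_def by blast+

lemma H1_eq_integral:
  assumes "H1 a b h g" "x \<in> {a..b}"
  shows "h x = h a + integral {a..x} g"
proof -
  have "set_integrable lborel {a..x} g"
    using H1_integrable(1)[OF assms(1)] by (rule set_integrable_subset) (use assms(2) in auto)
  moreover have "h x = h a + (LINT s:{a..x}|lborel. g s)"
    using assms unfolding H1_def by blast
  ultimately show ?thesis
    by (simp add: set_borel_integral_eq_integral(2))
qed

lemma H1I:
  assumes "set_integrable lborel {a..b} g" "set_integrable lborel {a..b} (\<lambda>x. (g x)\<^sup>2)"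
    and "\<And>x. x \<in> {a..b} \<Longrightarrow> h x = h a + integral {a..x} g"
  shows "H1 a b h g"
  unfolding H1_def
proof (intro conjI ballI assms(1,2))
  fix x assume x: "x \<in> {a..b}"
  have "set_integrable lborel {a..x} g"
    by (rule set_integrable_subset[OF assms(1)]) (use x in auto)
  then have "(LINT s:{a..x}|lborel. g s) = integral {a..x} g"
    by (rule set_borel_integral_eq_integral(2))
  with assms(3)[OF x] show "h x = h a + (LINT s:{a..x}|lborel. g s)"
    by simp
qed

lemma H1_continuous_on:
  assumes "H1 a b h g"
  shows "continuous_on {a..b} h"
proof -
  have "continuous_on {a..b} (\<lambda>x. h a + integral {a..x} g)"
    by (intro continuous_intros indefinite_integral_continuous_1 H1_integrable(3)[OF assms])
  then show ?thesis
    by (rule continuous_on_eq) (metis H1_eq_integral[OF assms])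
qed

lemma H1_diff:
  assumes "H1 a b h g" "a \<le> x" "x \<le> y" "y \<le> b"
  shows "h y - h x = integral {x..y} g"
proof -
  have "integral {a..x} g + integral {x..y} g = integral {a..y} g"
    by (rule Henstock_Kurzweil_Integration.integral_combine)
      (use assms integrable_on_subinterval[OF H1_integrable(3)[OF assms(1)]] in auto)
  then show ?thesis
    using H1_eq_integral[OF assms(1), of x] H1_eq_integral[OF assms(1), of y] assms by auto
qed

lemma H1_increment_sq_le:
  assumes "H1 a b h g" "a \<le> x" "x \<le> y" "y \<le> b"
  shows "(h y - h x)\<^sup>2 \<le> (y - x) * integral {x..y} (\<lambda>s. (g s)\<^sup>2)"
proof -
  have "g integrable_on {x..y}" "(\<lambda>s. (g s)\<^sup>2) integrable_on {x..y}"
    using integrable_on_subinterval[OF H1_integrable(3)[OF assms(1)]]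
      integrable_on_subinterval[OF H1_integrable(4)[OF assms(1)]] assms(2-4) by auto
  then show ?thesis
    using square_integral_le[of g x y] H1_diff[OF assms] assms(3) by simp
qed

lemma H1_const: "H1 a b (\<lambda>_. c) (\<lambda>_. 0)"
  unfolding H1_def by (simp add: set_integrable_def set_lebesgue_integral_def)

lemma H1_uminus:
  assumes "H1 a b h g"
  shows "H1 a b (\<lambda>x. - h x) (\<lambda>x. - g x)"
proof (rule H1I)
  show "set_integrable lborel {a..b} (\<lambda>x. - g x)"
    using H1_integrable(1)[OF assms] by (simp add: set_integrable_def)
  show "set_integrable lborel {a..b} (\<lambda>x. (- g x)\<^sup>2)"
    using H1_integrable(2)[OF assms] by simp
  show "- h x = - h a + integral {a..x} (\<lambda>x. - g x)" if "x \<in> {a..b}" for x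
    using H1_eq_integral[OF assms that] by simp
qed

lemma H1_glue:
  assumes h: "H1 u v h g" and k: "H1 u v k g'" and ab: "u \<le> a" "a \<le> b" "b \<le> v"
    and ka: "k a = h a" and kb: "k b = h b"
  shows "H1 u v (\<lambda>x. if x \<in> {a..b} then k x else h x) (\<lambda>x. if x \<in> {a..b} then g' x else g x)"
    (is "H1 u v ?k ?g")
proof (rule H1I)
  show "set_integrable lborel {u..v} ?g"
    by (rule set_integrable_if) (use H1_integrable[OF h] H1_integrable[OF k] in auto)
  have "set_integrable lborel {u..v} (\<lambda>x. if x \<in> {a..b} then (g' x)\<^sup>2 else (g x)\<^sup>2)"
    by (rule set_integrable_if) (use H1_integrable[OF h] H1_integrable[OF k] in auto)
  then show "set_integrable lborel {u..v} (\<lambda>x. (?g x)\<^sup>2)"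
    by (rule back_subst[of "set_integrable _ _"]) (simp add: fun_eq_iff)
  have gI: "?g integrable_on {u..v}"
    using \<open>set_integrable lborel {u..v} ?g\<close> by (rule set_borel_integral_eq_integral(1))
  have outside: "integral {x..y} ?g = integral {x..y} g" if "y \<le> a \<or> b \<le> x" for x y
    by (rule integral_spike[where S="{a, b}"]) (use that in auto)
  have inside: "integral {x..y} ?g = integral {x..y} g'" if "a \<le> x" "y \<le> b" for x y
    by (rule integral_cong) (use that in auto)
  have split: "integral {u..y} ?g = integral {u..x} ?g + integral {x..y} ?g"
    if "u \<le> x" "x \<le> y" "y \<le> v" for x y
    by (rule Henstock_Kurzweil_Integration.integral_combine[symmetric]) (use that integrable_on_subinterval[OF gI] in auto)
  have ku: "?k u = h u"
    using ab ka by auto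
  show "?k x = ?k u + integral {u..x} ?g" if x: "x \<in> {u..v}" for x
  proof -
    consider "x < a" | "a \<le> x" "x \<le> b" | "b < x"
      by linarith
    then show ?thesis
    proof cases
      case 1
      then show ?thesis
        using outside[of x u] H1_diff[OF h, of u x] ku x by auto
    next
      case 2
      then show ?thesis
        using split[of a x] outside[of a u] inside[of a x] H1_diff[OF h, of u a] H1_diff[OF k, of a x]
          ku ka ab by auto
    next
      case 3
      then show ?thesis
        using split[of a b] split[of b x] outside[of a u] inside[of a b] outside[of x b]
          H1_diff[OF h, of u a] H1_diff[OF k, of a b] H1_diff[OF h, of b x] ku ka kb ab x by auto
    qed
  qed
qed

section \<open>The energy density\<close>

definition bulk_potential :: "real \<Rightarrow> real \<Rightarrow> real" where
  "bulk_potential t x = t / 8 * (1 - x\<^sup>2)\<^sup>2 + hplus t / 8 * (1 + 3 * x^4 - 4 * x^3)"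

definition energy_density :: "real \<Rightarrow> (real \<Rightarrow> real) \<Rightarrow> (real \<Rightarrow> real) \<Rightarrow> real \<Rightarrow> real" where
  "energy_density t h g r = ((1/2) * (g r)\<^sup>2 + 3 / r\<^sup>2 * (h r)\<^sup>2 + bulk_potential t (h r)) * r\<^sup>2"

lemma energy_density_eq:
  "r \<noteq> 0 \<Longrightarrow> energy_density t h g r = (1/2) * (g r)\<^sup>2 * r\<^sup>2 + 3 * (h r)\<^sup>2 + bulk_potential t (h r) * r\<^sup>2"
  unfolding energy_density_def by (simp add: field_simps)

lemma energy_density_integrable:
  assumes H: "H1 a b h g" and a: "0 < a"
  shows "set_integrable lborel {a..b} (energy_density t h g)"
proof -
  define P where "P r = (3 / r\<^sup>2 * (h r)\<^sup>2 + bulk_potential t (h r)) * r\<^sup>2" for r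
  have "set_borel_measurable lborel {a..b} (\<lambda>r. (g r)\<^sup>2)"
    using H1_integrable(2)[OF H]
    unfolding set_integrable_def set_borel_measurable_def by (rule borel_measurable_integrable)
  then have "set_borel_measurable lborel {a..b} (\<lambda>r. r\<^sup>2 / 2 * (g r)\<^sup>2)"
    unfolding set_borel_measurable_def by (simp add: mult.left_commute[of "indicator _ _"])
  then have kinetic: "set_integrable lborel {a..b} (\<lambda>r. r\<^sup>2 / 2 * (g r)\<^sup>2)"
  proof (rule set_integrable_bound[OF set_integrable_mult_right[OF H1_integrable(2)[OF H], of "b\<^sup>2"]])
    have "r\<^sup>2 / 2 * (g r)\<^sup>2 \<le> b\<^sup>2 * (g r)\<^sup>2" if "r \<in> {a..b}" for r
    proof -
      have "r\<^sup>2 \<le> b\<^sup>2"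
        using that a by (intro power_mono) auto
      then have "r\<^sup>2 / 2 \<le> b\<^sup>2"
        using zero_le_power2[of b] by linarith
      then show ?thesis
        by (intro mult_right_mono) auto
    qed
    then show "AE r in lborel. r \<in> {a..b} \<longrightarrow> norm (r\<^sup>2 / 2 * (g r)\<^sup>2) \<le> norm (b\<^sup>2 * (g r)\<^sup>2)"
      by (intro AE_I2) auto
  qed
  have "continuous_on {a..b} P"
    unfolding P_def bulk_potential_def
    by (intro continuous_intros H1_continuous_on[OF H]) (use a in auto)
  then have "set_integrable lborel {a..b} P"
    by (rule borel_integrable_atLeastAtMost')
  then have "set_integrable lborel {a..b} (\<lambda>r. r\<^sup>2 / 2 * (g r)\<^sup>2 + P r)"
    using kinetic by (intro set_integral_add(1))
  moreover have "energy_density t h g = (\<lambda>r. r\<^sup>2 / 2 * (g r)\<^sup>2 + P r)"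
    unfolding energy_density_def P_def by (simp add: fun_eq_iff algebra_simps)
  ultimately show ?thesis
    by (simp only:)
qed

lemma energy_density_integrable_on:
  assumes "H1 u v h g" "0 < u" "u \<le> a" "b \<le> v"
  shows "energy_density t h g integrable_on {a..b}"
  using integrable_on_subinterval[OF set_borel_integral_eq_integral(1)[OF energy_density_integrable[OF assms(1,2)]]]
    assms(3,4) by auto

lemma energy_eq_integral:
  assumes "H1 1 R h g"
  shows "energy t R h g = integral {1..R} (energy_density t h g)"
  using set_borel_integral_eq_integral(2)[OF energy_density_integrable[OF assms, of t]]
  unfolding energy_def energy_density_def bulk_potential_def by (simp add: add.assoc)

lemma hplus_ge: "t \<ge> 0 \<Longrightarrow> 3/2 \<le> hplus t"
  using real_sqrt_le_mono[of 9 "9 + 8 * t"] unfolding hplus_def by simp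

lemma quartic_nonneg: "0 \<le> 1 + 3 * (x::real)^4 - 4 * x^3"
proof -
  have "1 + 3 * x^4 - 4 * x^3 = (x - 1)\<^sup>2 * (2 * x\<^sup>2 + (x + 1)\<^sup>2)"
    by (simp add: power2_eq_square power4_eq_xxxx power3_eq_cube algebra_simps)
  then show ?thesis
    by simp
qed

lemma well_le_bulk_potential:
  assumes "t \<ge> 0"
  shows "t / 8 * (1 - x\<^sup>2)\<^sup>2 \<le> bulk_potential t x"
  unfolding bulk_potential_def using hplus_ge[OF assms] quartic_nonneg[of x] by simp

lemma bulk_potential_nonneg:
  assumes "t \<ge> 0"
  shows "0 \<le> bulk_potential t x"
proof -
  have "0 \<le> t / 8 * (1 - x\<^sup>2)\<^sup>2"
    using assms by simp
  then show ?thesis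
    using well_le_bulk_potential[OF assms, of x] by linarith
qed

lemma bulk_potential_one [simp]: "bulk_potential t 1 = 0"
  unfolding bulk_potential_def by simp

lemma bulk_potential_increase_le:
  assumes t: "t \<ge> 0" and x: "0 \<le> x" "x \<le> d" and d: "d \<le> 1"
  shows "bulk_potential t d - bulk_potential t x \<le> hplus t * d\<^sup>2"
proof -
  have "(1 - d\<^sup>2)\<^sup>2 \<le> (1 - x\<^sup>2)\<^sup>2"
    using x d by (intro power_mono) (auto intro: power_mono power_le_one)
  then have well: "t / 8 * (1 - d\<^sup>2)\<^sup>2 \<le> t / 8 * (1 - x\<^sup>2)\<^sup>2"
    using t by (intro mult_left_mono) auto
  have "d^4 \<le> d\<^sup>2" "x^3 \<le> d^3" "0 \<le> x^4" "0 \<le> d\<^sup>2"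
    using x d by (auto intro: power_decreasing power_mono)
  then have "(1 + 3 * d^4 - 4 * d^3) - (1 + 3 * x^4 - 4 * x^3) \<le> 8 * d\<^sup>2"
    by linarith
  then have "hplus t / 8 * ((1 + 3 * d^4 - 4 * d^3) - (1 + 3 * x^4 - 4 * x^3)) \<le> hplus t * d\<^sup>2"
    using hplus_ge[OF t] mult_left_mono[of _ "8 * d\<^sup>2" "hplus t / 8"] by simp
  then have "hplus t / 8 * (1 + 3 * d^4 - 4 * d^3) - hplus t / 8 * (1 + 3 * x^4 - 4 * x^3)
      \<le> hplus t * d\<^sup>2"
    by (simp only: right_diff_distrib)
  with well show ?thesis
    unfolding bulk_potential_def by linarith
qed

lemma energy_const_one:
  assumes "1 \<le> R"
  shows "energy t R (\<lambda>_. 1) (\<lambda>_. 0) = 3 * (R - 1)"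
proof -
  have "energy t R (\<lambda>_. 1) (\<lambda>_. 0) = integral {1..R} (\<lambda>_. 3)"
    unfolding energy_eq_integral[OF H1_const]
    by (rule integral_cong) (auto simp: energy_density_eq)
  then show ?thesis
    using assms by simp
qed

section \<open>Minimizers\<close>

locale energy_minimizer =
  fixes t R :: real and h g :: "real \<Rightarrow> real"
  assumes R_gt_1: "R > 1" and t_nonneg: "t \<ge> 0" and H1: "H1 1 R h g"
    and h_1: "h 1 = 1" and h_R: "h R = 1"
    and minimal: "\<And>k k'. H1 1 R k k' \<Longrightarrow> k 1 = 1 \<Longrightarrow> k R = 1 \<Longrightarrow> energy t R h g \<le> energy t R k k'"

lemma is_minimizer_imp_energy_minimizer:
  assumes "is_minimizer t R h" "R > 1" "t \<ge> 0"
  obtains g where "energy_minimizer t R h g"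
  using assms unfolding is_minimizer_def energy_minimizer_def by blast

context energy_minimizer
begin

lemma continuous_on_h: "continuous_on {1..R} h"
  using H1 by (rule H1_continuous_on)

text \<open>Gluing \<open>k\<close> into \<open>h\<close> on \<open>[a, b]\<close> gives an admissible competitor; \<open>F\<close> is any integrable
  lower bound for the pointwise energy saving.\<close>
lemma local_minimality:
  assumes k: "H1 1 R k k'" and ab: "1 \<le> a" "a \<le> b" "b \<le> R" and ka: "k a = h a" and kb: "k b = h b"
    and F: "F integrable_on {a..b}"
    and gain: "\<And>r. r \<in> {a..b} \<Longrightarrow> F r \<le> energy_density t h g r - energy_density t k k' r"
  shows "integral {a..b} F \<le> 0"
proof -
  define D where "D r = energy_density t k k' r - energy_density t h g r" for r
  let ?k = "\<lambda>x. if x \<in> {a..b} then k x else h x"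
  let ?k' = "\<lambda>x. if x \<in> {a..b} then k' x else g x"
  have glued: "H1 1 R ?k ?k'"
    by (rule H1_glue[OF H1 k ab ka kb])
  have "?k 1 = 1" "?k R = 1"
    using ab ka kb h_1 h_R by auto
  then have "energy t R h g \<le> energy t R ?k ?k'"
    by (rule minimal[OF glued])
  moreover have "energy_density t ?k ?k' = (\<lambda>r. energy_density t h g r + (if r \<in> {a..b} then D r else 0))"
    by (auto simp: fun_eq_iff D_def energy_density_def)
  moreover have hI: "energy_density t h g integrable_on {1..R}"
    using energy_density_integrable_on[OF H1 zero_less_one order.refl order.refl] .
  moreover have "D integrable_on {a..b}"
    unfolding D_def using energy_density_integrable_on[OF k zero_less_one ab(1,3)]
      energy_density_integrable_on[OF H1 zero_less_one ab(1,3)]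
    by (rule integrable_diff)
  moreover have ab_sub: "{a..b} \<inter> {1..R} = {a..b}"
    using ab by auto
  ultimately have DI: "(\<lambda>r. if r \<in> {a..b} then D r else 0) integrable_on {1..R}"
    unfolding integrable_restrict_Int ab_sub by simp
  have "integral {1..R} (energy_density t ?k ?k') = integral {1..R} (energy_density t h g) + integral {a..b} D"
    unfolding \<open>energy_density t ?k ?k' = _\<close> integral_add[OF hI DI] integral_restrict_Int ab_sub ..
  with \<open>energy t R h g \<le> energy t R ?k ?k'\<close> have "0 \<le> integral {a..b} D"
    unfolding energy_eq_integral[OF H1] energy_eq_integral[OF glued] by linarith
  moreover have "integral {a..b} F \<le> integral {a..b} (\<lambda>r. - D r)"
    by (rule integral_le[OF F integrable_neg[OF \<open>D integrable_on {a..b}\<close>]]) (simp add: D_def gain)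
  ultimately show ?thesis
    by simp
qed

lemma no_positive_gain:
  assumes k: "H1 1 R k k'" and ab: "1 \<le> a" "a < b" "b \<le> R" and ka: "k a = h a" and kb: "k b = h b"
    and F: "continuous_on {a..b} F" "\<forall>r\<in>{a..b}. 0 \<le> F r" "x \<in> {a..b}" "0 < F x"
    and gain: "\<And>r. r \<in> {a..b} \<Longrightarrow> F r \<le> energy_density t h g r - energy_density t k k' r"
  shows False
  using local_minimality[OF k ab(1) less_imp_le[OF ab(2)] ab(3) ka kb integrable_continuous_interval[OF F(1)] gain]
    integral_pos_if_continuous[OF F(1) ab(2) F(2-4)]
  by simp

lemma h_nonneg:
  assumes x: "x \<in> {1..R}"
  shows "0 \<le> h x"
proof (rule ccontr)
  assume "\<not> 0 \<le> h x"
  then obtain a b where ab: "1 \<le> a" "a < x" "x < b" "b \<le> R" "h a = 0" "h b = 0"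
    and below: "\<forall>y\<in>{a..b}. h y \<le> 0"
    using sublevel_component[OF continuous_on_h x, of 0] h_1 h_R by auto
  define F where "F r = hplus t * (- h r)^3 * r\<^sup>2" for r
  have "0 < hplus t"
    using hplus_ge[OF t_nonneg] by simp
  show False
  proof (rule no_positive_gain[OF H1_uminus[OF H1], of a b F x])
    show "continuous_on {a..b} F"
      unfolding F_def by (intro continuous_intros continuous_on_subset[OF continuous_on_h]) (use ab in auto)
    show "\<forall>r\<in>{a..b}. 0 \<le> F r"
      using below \<open>0 < hplus t\<close> unfolding F_def by (intro ballI mult_nonneg_nonneg) (auto intro: zero_le_power)
    show "0 < F x"
      using \<open>\<not> 0 \<le> h x\<close> \<open>0 < hplus t\<close> ab unfolding F_def by (intro mult_pos_pos zero_less_power) auto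
    show "F r \<le> energy_density t h g r - energy_density t (\<lambda>x. - h x) (\<lambda>x. - g x) r" for r
      by (simp add: F_def energy_density_def bulk_potential_def algebra_simps)
  qed (use ab in auto)
qed

lemma h_le_one:
  assumes x: "x \<in> {1..R}"
  shows "h x \<le> 1"
proof (rule ccontr)
  assume "\<not> h x \<le> 1"
  moreover have "continuous_on {1..R} (\<lambda>r. - h r)"
    by (intro continuous_intros continuous_on_h)
  ultimately obtain a b where ab: "1 \<le> a" "a < x" "x < b" "b \<le> R" "h a = 1" "h b = 1"
    and above: "\<forall>y\<in>{a..b}. 1 \<le> h y"
    using sublevel_component[of 1 R "\<lambda>r. - h r" x "-1"] x h_1 h_R by auto
  define F where "F r = 3 * ((h r)\<^sup>2 - 1)" for r
  show False
  proof (rule no_positive_gain[OF H1_const[of 1 R 1], of a b F x])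
    show "continuous_on {a..b} F"
      unfolding F_def by (intro continuous_intros continuous_on_subset[OF continuous_on_h]) (use ab in auto)
    show "\<forall>r\<in>{a..b}. 0 \<le> F r"
      using above by (auto simp: F_def one_le_power)
    show "0 < F x"
      using \<open>\<not> h x \<le> 1\<close> by (simp add: F_def one_less_power)
    show "F r \<le> energy_density t h g r - energy_density t (\<lambda>_. 1) (\<lambda>_. 0) r" if "r \<in> {a..b}" for r
    proof -
      have "0 \<le> bulk_potential t (h r) * r\<^sup>2"
        using bulk_potential_nonneg[OF t_nonneg] by simp
      then show ?thesis
        using that ab by (simp add: energy_density_eq F_def)
    qed
  qed (use ab in auto)
qed

lemma sq_deriv_integral_le_on_sublevel:
  assumes ab: "1 \<le> a" "a \<le> b" "b \<le> R" and ha: "h a = \<delta>" and hb: "h b = \<delta>" and \<delta>: "\<delta> \<le> 1"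
    and sub: "\<forall>r\<in>{a..b}. 0 \<le> h r \<and> h r \<le> \<delta>"
  shows "integral {a..b} (\<lambda>r. (g r)\<^sup>2) \<le> 2 * (3 + hplus t) * R\<^sup>2 * (R - 1) * \<delta>\<^sup>2"
proof -
  define K where "K = (3 + hplus t) * R\<^sup>2"
  have g2: "(\<lambda>r. (g r)\<^sup>2) integrable_on {a..b}"
    using integrable_on_subinterval[OF H1_integrable(4)[OF H1]] ab by auto
  have "integral {a..b} (\<lambda>r. (g r)\<^sup>2 / 2 - K * \<delta>\<^sup>2) \<le> 0"
  proof (rule local_minimality[OF H1_const[of 1 R \<delta>] ab])
    show "(\<lambda>r. (g r)\<^sup>2 / 2 - K * \<delta>\<^sup>2) integrable_on {a..b}"
      using g2 by (intro integrable_diff integrable_const_ivl) simp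
    fix r assume r: "r \<in> {a..b}"
    have "bulk_potential t \<delta> - bulk_potential t (h r) \<le> hplus t * \<delta>\<^sup>2"
      using bulk_potential_increase_le[OF t_nonneg _ _ \<delta>] sub r by auto
    moreover have "1 \<le> r\<^sup>2" "r\<^sup>2 \<le> R\<^sup>2"
      using r ab by (auto simp: one_le_power intro: power_mono)
    ultimately have "(bulk_potential t \<delta> - bulk_potential t (h r)) * r\<^sup>2 \<le> hplus t * \<delta>\<^sup>2 * R\<^sup>2"
      using hplus_ge[OF t_nonneg] by (intro order.trans[OF mult_right_mono mult_left_mono]) auto
    moreover have "(g r)\<^sup>2 / 2 \<le> (1/2) * (g r)\<^sup>2 * r\<^sup>2" "3 * \<delta>\<^sup>2 \<le> 3 * \<delta>\<^sup>2 * R\<^sup>2"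
      using \<open>1 \<le> r\<^sup>2\<close> \<open>r\<^sup>2 \<le> R\<^sup>2\<close> by (simp_all add: mult_le_cancel_left1)
    moreover have "K * \<delta>\<^sup>2 = 3 * \<delta>\<^sup>2 * R\<^sup>2 + hplus t * \<delta>\<^sup>2 * R\<^sup>2"
      by (simp add: K_def algebra_simps)
    moreover have "r \<noteq> 0"
      using r ab by auto
    ultimately show "(g r)\<^sup>2 / 2 - K * \<delta>\<^sup>2 \<le> energy_density t h g r - energy_density t (\<lambda>_. \<delta>) (\<lambda>_. 0) r"
      by (simp add: energy_density_eq left_diff_distrib) (insert zero_le_power2[of "h r"], linarith)
  qed (use ha hb in auto)
  moreover have "integral {a..b} (\<lambda>r. (g r)\<^sup>2 / 2 - K * \<delta>\<^sup>2)
      = integral {a..b} (\<lambda>r. (g r)\<^sup>2) / 2 - (b - a) * (K * \<delta>\<^sup>2)"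
    using ab by (simp add: integral_diff[OF integrable_on_divide[OF g2] integrable_const_ivl])
  ultimately have "integral {a..b} (\<lambda>r. (g r)\<^sup>2) / 2 \<le> (b - a) * (K * \<delta>\<^sup>2)"
    by simp
  also have "\<dots> \<le> (R - 1) * (K * \<delta>\<^sup>2)"
    using ab hplus_ge[OF t_nonneg] by (intro mult_right_mono) (auto simp: K_def)
  finally show ?thesis
    by (simp add: K_def algebra_simps)
qed

lemma h_pos:
  assumes x: "x \<in> {1..R}"
  shows "0 < h x"
proof (rule ccontr)
  assume "\<not> 0 < h x"
  then obtain c where "c \<in> {1<..R}" "h c \<le> 0" and before_c: "\<forall>y\<in>{1..<c}. 0 < h y"
    using first_nonpos[OF continuous_on_h x] h_1 by auto
  then have c: "c \<in> {1..R}" "h c = 0" "1 < c"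
    using h_nonneg[of c] by auto
  define L where "L = 2 * (3 + hplus t) * R\<^sup>2 * (R - 1)"
  have "0 < L"
    unfolding L_def using R_gt_1 hplus_ge[OF t_nonneg] by simp
  define \<epsilon> where "\<epsilon> = min (c - 1) (1 / (2 * L))"
  have \<epsilon>: "0 < \<epsilon>" "\<epsilon> \<le> c - 1" "\<epsilon> * L \<le> 1 / 2"
    unfolding \<epsilon>_def using c \<open>0 < L\<close> by (auto simp: min_def field_simps)
  obtain m where m: "m \<in> {1..c - \<epsilon>}" "\<forall>y\<in>{1..c - \<epsilon>}. h m \<le> h y"
    using continuous_attains_inf[of "{1..c - \<epsilon>}" h] continuous_on_subset[OF continuous_on_h] \<epsilon> c
    by auto
  define \<delta> where "\<delta> = h m"
  have \<delta>: "0 < \<delta>" "\<delta> \<le> 1" "\<delta> \<le> h (c - \<epsilon>)"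
    unfolding \<delta>_def using before_c h_le_one[of m] m \<epsilon> c by auto
  obtain a b where ab: "c - \<epsilon> \<le> a" "a < c" "c < b" "b \<le> R" "h a = \<delta>" "h b = \<delta>"
    and below: "\<forall>y\<in>{a..b}. h y \<le> \<delta>"
    using sublevel_component[of "c - \<epsilon>" R h c \<delta>] continuous_on_subset[OF continuous_on_h] c \<epsilon> \<delta> h_R
    by auto
  have g2: "(\<lambda>r. (g r)\<^sup>2) integrable_on {a..b}"
    using integrable_on_subinterval[OF H1_integrable(4)[OF H1]] ab \<epsilon> by auto
  have "\<delta>\<^sup>2 = (h c - h a)\<^sup>2"
    using ab c by simp
  also have "\<dots> \<le> (c - a) * integral {a..c} (\<lambda>r. (g r)\<^sup>2)"
    using H1_increment_sq_le[OF H1, of a c] ab c \<epsilon> by simp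
  also have "\<dots> \<le> \<epsilon> * integral {a..b} (\<lambda>r. (g r)\<^sup>2)"
    using ab g2 integrable_on_subinterval[OF g2, of a c]
    by (intro mult_mono integral_subset_le integral_nonneg) auto
  also have "\<dots> \<le> \<epsilon> * (L * \<delta>\<^sup>2)"
    using sq_deriv_integral_le_on_sublevel[of a b \<delta>] ab \<epsilon> \<delta> below h_nonneg c
    unfolding L_def by (intro mult_left_mono) auto
  also have "\<dots> \<le> \<delta>\<^sup>2 / 2"
    using mult_right_mono[OF \<epsilon>(3), of "\<delta>\<^sup>2"] by (simp add: algebra_simps)
  finally show False
    using \<delta> by simp
qed

lemma kinetic_and_well_bound:
  "integral {1..R} (\<lambda>r. (g r)\<^sup>2) / 2 + t / 8 * integral {1..R} (\<lambda>r. (1 - (h r)\<^sup>2)\<^sup>2) \<le> 3 * (R - 1)"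
proof -
  have g2: "(\<lambda>r. (g r)\<^sup>2) integrable_on {1..R}"
    using H1 by (rule H1_integrable(4))
  have w: "(\<lambda>r. (1 - (h r)\<^sup>2)\<^sup>2) integrable_on {1..R}"
    by (intro integrable_continuous_interval continuous_intros continuous_on_h)
  have "integral {1..R} (\<lambda>r. (g r)\<^sup>2 / 2 + t / 8 * (1 - (h r)\<^sup>2)\<^sup>2) \<le> integral {1..R} (energy_density t h g)"
  proof (rule integral_le)
    show "(\<lambda>r. (g r)\<^sup>2 / 2 + t / 8 * (1 - (h r)\<^sup>2)\<^sup>2) integrable_on {1..R}"
      using g2 w by (intro integrable_add integrable_on_divide integrable_on_mult_right)
    show "energy_density t h g integrable_on {1..R}"
      using energy_density_integrable_on[OF H1 zero_less_one order.refl order.refl] .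
    fix r assume r: "r \<in> {1..R}"
    have "1 \<le> r\<^sup>2"
      using r by (simp add: one_le_power)
    moreover note well_le_bulk_potential[OF t_nonneg, of "h r"]
    moreover have "bulk_potential t (h r) \<le> bulk_potential t (h r) * r\<^sup>2"
      using \<open>1 \<le> r\<^sup>2\<close> bulk_potential_nonneg[OF t_nonneg, of "h r"] by (simp add: mult_le_cancel_left1)
    ultimately have "t / 8 * (1 - (h r)\<^sup>2)\<^sup>2 \<le> bulk_potential t (h r) * r\<^sup>2"
      by linarith
    moreover have "(g r)\<^sup>2 / 2 \<le> (1/2) * (g r)\<^sup>2 * r\<^sup>2"
      using \<open>1 \<le> r\<^sup>2\<close> by (simp add: mult_le_cancel_left1)
    ultimately show "(g r)\<^sup>2 / 2 + t / 8 * (1 - (h r)\<^sup>2)\<^sup>2 \<le> energy_density t h g r"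
      using r by (simp add: energy_density_eq) (insert zero_le_power2[of "h r"], linarith)
  qed
  also have "\<dots> \<le> 3 * (R - 1)"
    using minimal[OF H1_const] energy_const_one[of R t] energy_eq_integral[OF H1] R_gt_1 by simp
  finally show ?thesis
    by (simp only: integral_add[OF integrable_on_divide[OF g2] integrable_on_mult_right[OF w]]
        integral_divide integral_mult_right)
qed

lemma sq_deriv_integral_le: "integral {1..R} (\<lambda>r. (g r)\<^sup>2) \<le> 6 * (R - 1)"
proof -
  have "0 \<le> t / 8 * integral {1..R} (\<lambda>r. (1 - (h r)\<^sup>2)\<^sup>2)"
    using t_nonneg
    by (intro mult_nonneg_nonneg integral_nonneg integrable_continuous_interval continuous_intros
        continuous_on_h) auto
  then show ?thesis
    using kinetic_and_well_bound by linarith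
qed

lemma well_integral_le: "t * integral {1..R} (\<lambda>r. (1 - (h r)\<^sup>2)\<^sup>2) \<le> 24 * (R - 1)"
proof -
  have "0 \<le> integral {1..R} (\<lambda>r. (g r)\<^sup>2)"
    by (rule integral_nonneg[OF H1_integrable(4)[OF H1]]) simp
  then show ?thesis
    using kinetic_and_well_bound by linarith
qed

lemma increment_sq_le:
  assumes "x \<in> {1..R}" "y \<in> {1..R}"
  shows "(h y - h x)\<^sup>2 \<le> 6 * (R - 1) * \<bar>y - x\<bar>"
proof -
  have ordered: "(h v - h u)\<^sup>2 \<le> 6 * (R - 1) * (v - u)" if uv: "1 \<le> u" "u \<le> v" "v \<le> R" for u v
  proof -
    have g2: "(\<lambda>r. (g r)\<^sup>2) integrable_on {1..R}"
      using H1 by (rule H1_integrable(4))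
    have "(h v - h u)\<^sup>2 \<le> (v - u) * integral {u..v} (\<lambda>r. (g r)\<^sup>2)"
      using H1_increment_sq_le[OF H1 uv] .
    also have "\<dots> \<le> (v - u) * integral {1..R} (\<lambda>r. (g r)\<^sup>2)"
      using uv g2 integrable_on_subinterval[OF g2, of u v]
      by (intro mult_left_mono integral_subset_le) auto
    also have "\<dots> \<le> (v - u) * (6 * (R - 1))"
      using uv sq_deriv_integral_le by (intro mult_left_mono) auto
    finally show ?thesis
      by (simp add: mult.commute)
  qed
  show ?thesis
  proof (cases "x \<le> y")
    case True
    then show ?thesis
      using ordered[of x y] assms by simp
  next
    case False
    then show ?thesis
      using ordered[of y x] assms by (simp add: power2_commute)
  qed
qed

end

section \<open>Uniform convergence to the constant 1\<close>

lemma well_integral_ge_of_dip: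
  fixes f :: "real \<Rightarrow> real"
  assumes ab: "a < b" and C: "0 < C" and \<epsilon>: "0 < \<epsilon>"
    and cont: "continuous_on {a..b} f" and range: "\<forall>y\<in>{a..b}. 0 \<le> f y \<and> f y \<le> 1"
    and increment: "\<forall>x\<in>{a..b}. \<forall>y\<in>{a..b}. (f y - f x)\<^sup>2 \<le> C * \<bar>y - x\<bar>"
    and x: "x \<in> {a..b}" and dip: "f x \<le> 1 - \<epsilon>"
  shows "min (\<epsilon>\<^sup>2 / (4 * C)) ((b - a) / 2) * (\<epsilon>\<^sup>2 / 4) \<le> integral {a..b} (\<lambda>y. (1 - (f y)\<^sup>2)\<^sup>2)"
proof -
  define d where "d = min (\<epsilon>\<^sup>2 / (4 * C)) ((b - a) / 2)"
  have d: "0 < d" "d \<le> (b - a) / 2" "C * d \<le> (\<epsilon> / 2)\<^sup>2"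
    unfolding d_def using ab C \<epsilon> by (auto simp: min_def field_simps power_divide)
  define p where "p = (if x + d \<le> b then x else x - d)"
  have p: "a \<le> p" "p + d \<le> b" "p \<le> x" "x \<le> p + d"
    unfolding p_def using x d by auto
  \<comment> \<open>\<open>f\<close> stays below \<open>1 - \<epsilon>/2\<close> on a whole interval of length \<open>d\<close> around \<open>x\<close>\<close>
  have low: "\<epsilon>\<^sup>2 / 4 \<le> (1 - (f y)\<^sup>2)\<^sup>2" if y: "y \<in> {p..p + d}" for y
  proof -
    have "(f y - f x)\<^sup>2 \<le> C * \<bar>y - x\<bar>"
      using increment x y p by auto
    also have "\<dots> \<le> C * d"
      using y p C by (intro mult_left_mono) auto
    also have "\<dots> \<le> (\<epsilon> / 2)\<^sup>2"
      by (fact d(3))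
    finally have "\<bar>f y - f x\<bar> \<le> \<epsilon> / 2"
      using \<epsilon> by (simp add: abs_le_square_iff[symmetric])
    then have "f y - f x \<le> \<epsilon> / 2"
      by linarith
    moreover have "0 \<le> f y" "f y \<le> 1"
      using range y p by auto
    then have "(f y)\<^sup>2 \<le> f y"
      unfolding power2_eq_square by (simp add: mult_left_le)
    ultimately have "\<epsilon> / 2 \<le> 1 - (f y)\<^sup>2"
      using dip by linarith
    then have "(\<epsilon> / 2)\<^sup>2 \<le> (1 - (f y)\<^sup>2)\<^sup>2"
      using \<epsilon> by (intro power_mono) auto
    then show ?thesis
      by (simp add: power_divide)
  qed
  have w: "(\<lambda>y. (1 - (f y)\<^sup>2)\<^sup>2) integrable_on {a..b}"
    by (intro integrable_continuous_interval continuous_intros cont)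
  have "d * (\<epsilon>\<^sup>2 / 4) = integral {p..p + d} (\<lambda>y. \<epsilon>\<^sup>2 / 4)"
    using d by simp
  also have "\<dots> \<le> integral {p..p + d} (\<lambda>y. (1 - (f y)\<^sup>2)\<^sup>2)"
    using low integrable_on_subinterval[OF w, of p "p + d"] p by (intro integral_le) auto
  also have "\<dots> \<le> integral {a..b} (\<lambda>y. (1 - (f y)\<^sup>2)\<^sup>2)"
    using p w integrable_on_subinterval[OF w, of p "p + d"] by (intro integral_subset_le) auto
  finally show ?thesis
    unfolding d_def .
qed

lemma uniform_limit_one_of_well_integral_decay:
  fixes f :: "real \<Rightarrow> real \<Rightarrow> real"
  assumes ab: "a < b" and C: "0 < C"
    and cont: "\<And>t. t \<ge> 0 \<Longrightarrow> continuous_on {a..b} (f t)"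
    and range: "\<And>t. t \<ge> 0 \<Longrightarrow> \<forall>y\<in>{a..b}. 0 \<le> f t y \<and> f t y \<le> 1"
    and increment: "\<And>t. t \<ge> 0 \<Longrightarrow> \<forall>x\<in>{a..b}. \<forall>y\<in>{a..b}. (f t y - f t x)\<^sup>2 \<le> C * \<bar>y - x\<bar>"
    and decay: "\<And>t. t \<ge> 0 \<Longrightarrow> t * integral {a..b} (\<lambda>y. (1 - (f t y)\<^sup>2)\<^sup>2) \<le> B"
  shows "uniform_limit {a..b} f (\<lambda>_. 1) at_top"
proof (rule uniform_limitI)
  fix \<epsilon> :: real assume \<epsilon>: "0 < \<epsilon>"
  define m where "m = min (\<epsilon>\<^sup>2 / (4 * C)) ((b - a) / 2) * (\<epsilon>\<^sup>2 / 4)"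
  have "0 < m"
    unfolding m_def using ab C \<epsilon> by simp
  have "dist (f t x) 1 < \<epsilon>" if t: "max 0 (B / m + 1) \<le> t" and x: "x \<in> {a..b}" for t x
  proof (rule ccontr)
    assume "\<not> dist (f t x) 1 < \<epsilon>"
    then have "f t x \<le> 1 - \<epsilon>"
      using range[of t] t x by (auto simp: dist_real_def)
    then have "m \<le> integral {a..b} (\<lambda>y. (1 - (f t y)\<^sup>2)\<^sup>2)"
      unfolding m_def using t x by (intro well_integral_ge_of_dip ab C \<epsilon> cont range increment) auto
    then have "t * m \<le> B"
      using decay[of t] t by (meson max.boundedE mult_left_mono order.trans)
    then show False
      using t \<open>0 < m\<close> by (simp add: field_simps)
  qed
  then show "\<forall>\<^sub>F t in at_top. \<forall>x\<in>{a..b}. dist (f t x) 1 < \<epsilon>"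
    unfolding eventually_at_top_linorder by blast
qed

theorem lemma5p1:
  fixes R :: real and h :: "real \<Rightarrow> real \<Rightarrow> real"
  assumes "R > 1"
    and "\<And>t. t \<ge> 0 \<Longrightarrow> is_minimizer t R (h t)"
  shows "(\<forall>t\<ge>0. \<forall>r\<in>{1..R}. 0 < h t r \<and> h t r \<le> 1)
         \<and> uniform_limit {1..R} h (\<lambda>_. 1) at_top"
proof -
  have M: "\<exists>g. energy_minimizer t R (h t) g" if "t \<ge> 0" for t
    using is_minimizer_imp_energy_minimizer[OF assms(2)[OF that] assms(1) that] by metis
  have range: "\<forall>r\<in>{1..R}. 0 < h t r \<and> h t r \<le> 1" if "t \<ge> 0" for t
    using M[OF that] energy_minimizer.h_pos energy_minimizer.h_le_one by blast
  have "uniform_limit {1..R} h (\<lambda>_. 1) at_top"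
  proof (rule uniform_limit_one_of_well_integral_decay[where C = "6 * (R - 1)" and B = "24 * (R - 1)"])
    fix t :: real assume "t \<ge> 0"
    then obtain g where m: "energy_minimizer t R (h t) g"
      using M by blast
    show "continuous_on {1..R} (h t)"
      using energy_minimizer.continuous_on_h[OF m] .
    show "\<forall>x\<in>{1..R}. \<forall>y\<in>{1..R}. (h t y - h t x)\<^sup>2 \<le> 6 * (R - 1) * \<bar>y - x\<bar>"
      using energy_minimizer.increment_sq_le[OF m] by blast
    show "t * integral {1..R} (\<lambda>y. (1 - (h t y)\<^sup>2)\<^sup>2) \<le> 24 * (R - 1)"
      using energy_minimizer.well_integral_le[OF m] .
    show "\<forall>y\<in>{1..R}. 0 \<le> h t y \<and> h t y \<le> 1"
      using range[OF \<open>t \<ge> 0\<close>] by (auto simp: less_imp_le)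
  qed (use assms(1) in auto)
  with range show ?thesis
    by blast
qed

end
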